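(* The complexity measure $M$ is downward non-increasing: for every affine subspace $U\subseteq\mathbb{F}_2^n$, every function $f:U\to\mathbb{F}_2$, and every affine subspace $W\subseteq U$, we have $M(f|_W)\le M(f)$, where $f|_W$ denotes the restriction of $f$ to $W$.
   Context: For an affine subspace $V\subseteq\mathbb{F}_2^n$ with $t=\dim V$ and a function $g:V\to\mathbb{F}_2$, choose an affine map $L:\mathbb{F}_2^t\to\mathbb{F}_2^n$ with $L(\mathbb{F}_2^t)=V$ (so $L$ is a bijection onto $V$), and define $G:(\mathbb{F}_2^t)^4\to\mathbb{F}_2$ by $G(x_1,x_2,x_3,x_4)=g(L(x_1+x_2+x_3+x_4))$. Then $M(g)$ is defined as $\mathrm{CC}_4(G)$; this does not depend on the choice of $L$. Here $\mathrm{CC}_4(G)$ is the deterministic number-in-hand multiparty communication complexity of $G$ in the blackboard model: $4$ players, player $P_i$ holds $x_i$, every message is written on a blackboard visible to all, and $\mathrm{CC}_4(G)$ is the least number of bits communicated in the worst case by a deterministic protocol computing $G$ correctly on all inputs. *)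

theory Defs
  imports Main
begin

section \<open>The vector space F_2^n, represented as boolean lists of length n\<close>

definition vec :: "nat \<Rightarrow> bool list set" where
  "vec n = {x. length x = n}"

definition vzero :: "nat \<Rightarrow> bool list" where
  "vzero n = replicate n False"

definition vadd :: "bool list \<Rightarrow> bool list \<Rightarrow> bool list" where
  "vadd x y = map2 (\<noteq>) x y"

text \<open>A linear subspace of F_2^n: contains 0 and is closed under addition
  (over F_2 this is exactly closure under linear combinations).
  An affine subspace is a translate of a linear subspace.\<close>
definition lin_subspace :: "nat \<Rightarrow> bool list set \<Rightarrow> bool" where
  "lin_subspace n S \<longleftrightarrow> S \<subseteq> vec n \<and> vzero n \<in> S \<and> (\<forall>x\<in>S. \<forall>y\<in>S. vadd x y \<in> S)"

definition affine_subspace :: "nat \<Rightarrow> bool list set \<Rightarrow> bool" where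
  "affine_subspace n V \<longleftrightarrow> (\<exists>a\<in>vec n. \<exists>S. lin_subspace n S \<and> V = vadd a ` S)"

text \<open>Affine maps F_2^t -> F_2^n: L(x) - L(0) is additive (= linear over F_2).\<close>
definition affine_map :: "nat \<Rightarrow> nat \<Rightarrow> (bool list \<Rightarrow> bool list) \<Rightarrow> bool" where
  "affine_map t n L \<longleftrightarrow> (\<forall>x\<in>vec t. L x \<in> vec n) \<and>
     (\<forall>x\<in>vec t. \<forall>y\<in>vec t. L (vadd x y) = vadd (vadd (L x) (L y)) (L (vzero t)))"

text \<open>A protocol tree: at an internal node, player i (0 <= i < 4) writes one bit on the
  blackboard, computed from its own input (the history is encoded by the position in the tree).\<close>
datatype 'a proto = Leaf bool | Node nat "'a \<Rightarrow> bool" "'a proto" "'a proto"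

fun proto_wf :: "'a proto \<Rightarrow> bool" where
  "proto_wf (Leaf b) = True"
| "proto_wf (Node i f l r) = (i < 4 \<and> proto_wf l \<and> proto_wf r)"

fun proto_depth :: "'a proto \<Rightarrow> nat" where
  "proto_depth (Leaf b) = 0"
| "proto_depth (Node i f l r) = Suc (max (proto_depth l) (proto_depth r))"

fun proto_run :: "'a proto \<Rightarrow> 'a list \<Rightarrow> bool" where
  "proto_run (Leaf b) xs = b"
| "proto_run (Node i f l r) xs = (if f (xs ! i) then proto_run r xs else proto_run l xs)"

definition CC4 :: "'a set \<Rightarrow> ('a \<Rightarrow> 'a \<Rightarrow> 'a \<Rightarrow> 'a \<Rightarrow> bool) \<Rightarrow> nat" where
  "CC4 D G = (LEAST d. \<exists>P. proto_wf P \<and> proto_depth P = d \<and>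
      (\<forall>x1\<in>D. \<forall>x2\<in>D. \<forall>x3\<in>D. \<forall>x4\<in>D. proto_run P [x1, x2, x3, x4] = G x1 x2 x3 x4))"

text \<open>For an affine subspace V of F_2^n and g : V -> F_2 (given as a total function whose
  values outside V are irrelevant), choose t and an affine bijection L : F_2^t -> V and take
  CC_4 of G(x1,x2,x3,x4) = g(L(x1+x2+x3+x4)). (The choice does not matter.)\<close>
definition M :: "nat \<Rightarrow> bool list set \<Rightarrow> (bool list \<Rightarrow> bool) \<Rightarrow> nat" where
  "M n V g = (let (t, L) = (SOME (t, L). affine_map t n L \<and> bij_betw L (vec t) V)
              in CC4 (vec t) (\<lambda>x1 x2 x3 x4. g (L (vadd (vadd (vadd x1 x2) x3) x4))))"

end

theory Submission
  imports Defs
begin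

text \<open>Every affine subspace of F_2^n is the image of an affine bijection from some
  F_2^t (split on the first coordinate and induct on n). If W \<subseteq> U with parametrisations
  L_W, L_U, then A = L_U^{-1} \<circ> L_W is affine, and A(x1+x2+x3+x4) = (A x1 + A 0) + A x2 + A x3 + A x4.
  Hence a protocol for the function attached to U becomes one of the same depth for W once
  each player first maps its input through its share of A.\<close>

lemma length_vadd [simp]: "length (vadd x y) = min (length x) (length y)"
  by (simp add: vadd_def)

lemma nth_vadd [simp]: "i < length x \<Longrightarrow> i < length y \<Longrightarrow> vadd x y ! i = (x ! i \<noteq> y ! i)"
  by (simp add: vadd_def)

lemma vadd_Cons [simp]: "vadd (a # x) (b # y) = (a \<noteq> b) # vadd x y"
  by (simp add: vadd_def)

lemma length_vzero [simp]: "length (vzero n) = n"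
  by (simp add: vzero_def)

lemma nth_vzero [simp]: "i < n \<Longrightarrow> vzero n ! i = False"
  by (simp add: vzero_def)

lemma vzero_Suc: "vzero (Suc n) = False # vzero n"
  by (simp add: vzero_def)

lemma mem_vec_iff [simp]: "x \<in> vec n \<longleftrightarrow> length x = n"
  by (simp add: vec_def)

lemma vadd_commute: "vadd x y = vadd y x"
  by (auto intro: nth_equalityI)

lemma vadd_vadd_cancel: "length y \<le> length d \<Longrightarrow> vadd d (vadd d y) = y"
  by (auto intro: nth_equalityI)

lemma vec_Suc: "vec (Suc n) = (#) False ` vec n \<union> (#) True ` vec n"
proof (intro equalityI subsetI)
  fix z assume "z \<in> vec (Suc n)"
  then obtain a l where "z = a # l" "length l = n"
    by (cases z) auto
  then show "z \<in> (#) False ` vec n \<union> (#) True ` vec n"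
    by (cases a) auto
qed auto

definition affine_closed :: "bool list set \<Rightarrow> bool" where
  "affine_closed V \<longleftrightarrow> (\<forall>x\<in>V. \<forall>y\<in>V. \<forall>z\<in>V. vadd (vadd x y) z \<in> V)"

lemma affine_subspaceD:
  assumes "affine_subspace n V"
  shows "V \<noteq> {}" and "V \<subseteq> vec n" and "affine_closed V"
proof -
  obtain a S where a: "a \<in> vec n" and S: "lin_subspace n S" and V: "V = vadd a ` S"
    using assms by (auto simp: affine_subspace_def)
  then show "V \<noteq> {}" and "V \<subseteq> vec n"
    by (auto simp: lin_subspace_def subset_iff)
  have "vadd (vadd (vadd a p) (vadd a q)) (vadd a r) = vadd a (vadd (vadd p q) r)"
    if "p \<in> S" "q \<in> S" "r \<in> S" for p q r
    using that a S by (auto simp: lin_subspace_def subset_iff intro!: nth_equalityI)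
  with S show "affine_closed V"
    unfolding affine_closed_def V lin_subspace_def by auto
qed

lemma affine_closed_Cons_slice:
  assumes "affine_closed V"
  shows "affine_closed {y. b # y \<in> V}"
  unfolding affine_closed_def
proof (intro ballI)
  fix x y z assume "x \<in> {y. b # y \<in> V}" "y \<in> {y. b # y \<in> V}" "z \<in> {y. b # y \<in> V}"
  then have "vadd (vadd (b # x) (b # y)) (b # z) \<in> V"
    using assms unfolding affine_closed_def by blast
  then show "vadd (vadd x y) z \<in> {y. b # y \<in> V}"
    by simp
qed

lemma vec_Suc_set_split:
  assumes "V \<subseteq> vec (Suc n)"
  shows "V = (#) False ` {y. False # y \<in> V} \<union> (#) True ` {y. True # y \<in> V}"
proof (intro equalityI subsetI)
  fix z assume "z \<in> V"
  then have "length z = Suc n"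
    using assms by auto
  then obtain a l where "z = a # l"
    by (cases z) auto
  with \<open>z \<in> V\<close> show "z \<in> (#) False ` {y. False # y \<in> V} \<union> (#) True ` {y. True # y \<in> V}"
    by (cases a) auto
qed auto

lemma affine_map_Cons:
  assumes "affine_map t n L"
  shows "affine_map t (Suc n) (\<lambda>x. b # L x)"
  using assms by (simp add: affine_map_def)

lemma bij_betw_Cons:
  assumes "bij_betw L A V"
  shows "bij_betw (\<lambda>x. b # L x) A ((#) b ` V)"
proof -
  have "bij_betw ((#) b) V ((#) b ` V)"
    by (simp add: bij_betw_imageI)
  then show ?thesis
    using bij_betw_trans[OF assms] by (simp add: comp_def)
qed

lemma affine_map_split:
  assumes L0: "affine_map t n L0" and d: "d \<in> vec n"
  shows "affine_map (Suc t) (Suc n)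
           (\<lambda>z. hd z # (if hd z then vadd d (L0 (tl z)) else L0 (tl z)))"
    (is "affine_map _ _ ?L")
  unfolding affine_map_def
proof (intro conjI ballI)
  have len: "length (L0 x) = n" if "length x = t" for x
    using L0 that by (simp add: affine_map_def)
  show "?L x \<in> vec (Suc n)" if "x \<in> vec (Suc t)" for x
    using that d len by (auto simp: vec_Suc)
  fix x y assume "x \<in> vec (Suc t)" "y \<in> vec (Suc t)"
  then obtain a x' b y' where xy: "x = a # x'" "y = b # y'" "length x' = t" "length y' = t"
    by (cases x; cases y) auto
  have sum: "L0 (vadd x' y') = vadd (vadd (L0 x') (L0 y')) (L0 (vzero t))"
    using L0 xy by (simp add: affine_map_def)
  have "length (L0 x') = n" "length (L0 y') = n" "length (L0 (vzero t)) = n"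
    using len xy by auto
  then show "?L (vadd x y) = vadd (vadd (?L x) (?L y)) (?L (vzero (Suc t)))"
    using d by (cases a; cases b; simp add: xy vzero_Suc sum; intro nth_equalityI; auto)
qed

lemma bij_betw_split:
  assumes L0: "bij_betw L0 (vec t) V0" and d: "d \<in> vec n" and V0: "V0 \<subseteq> vec n"
  shows "bij_betw (\<lambda>z. hd z # (if hd z then vadd d (L0 (tl z)) else L0 (tl z)))
           (vec (Suc t)) ((#) False ` V0 \<union> (#) True ` vadd d ` V0)"
proof -
  have "inj_on (vadd d) V0"
    using d V0 by (intro inj_on_inverseI[where g = "vadd d"]) (auto simp: vadd_vadd_cancel)
  then have "bij_betw (vadd d \<circ> L0) (vec t) (vadd d ` V0)"
    using L0 by (intro bij_betw_trans) (auto simp: bij_betw_imageI)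
  then have "bij_betw (\<lambda>x. True # vadd d (L0 x)) (vec t) ((#) True ` vadd d ` V0)"
    using bij_betw_Cons by (simp add: comp_def)
  moreover have "bij_betw (\<lambda>x. False # L0 x) (vec t) ((#) False ` V0)"
    using L0 by (rule bij_betw_Cons)
  ultimately show ?thesis
    unfolding vec_Suc
    by (intro bij_betw_combine) (auto simp: bij_betw_def inj_on_def image_image)
qed

lemma ex_affine_bij_onto:
  assumes "V \<noteq> {}" and "V \<subseteq> vec n" and "affine_closed V"
  shows "\<exists>t L. affine_map t n L \<and> bij_betw L (vec t) V"
  using assms
proof (induction n arbitrary: V)
  case 0
  then have "V = vec 0"
    by auto
  then have "bij_betw id (vec 0) V"
    by simp
  moreover have "affine_map 0 0 id"
    by (auto simp: affine_map_def vadd_def)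
  ultimately show ?case
    by blast
next
  case (Suc n)
  define V0 where "V0 = {y. False # y \<in> V}"
  define V1 where "V1 = {y. True # y \<in> V}"
  have V: "V = (#) False ` V0 \<union> (#) True ` V1"
    unfolding V0_def V1_def using Suc.prems(2) by (rule vec_Suc_set_split)
  have sub: "V0 \<subseteq> vec n" "V1 \<subseteq> vec n"
    using Suc.prems(2) by (auto simp: V0_def V1_def subset_iff)
  have closed: "affine_closed V0" "affine_closed V1"
    unfolding V0_def V1_def using Suc.prems(3) by (auto intro: affine_closed_Cons_slice)
  have IH: "\<exists>t L. affine_map t n L \<and> bij_betw L (vec t) W"
    if "W \<in> {V0, V1}" "W \<noteq> {}" for W
    using Suc.IH that sub closed by auto
  have add3: "vadd (vadd x y) z \<in> V" if "x \<in> V" "y \<in> V" "z \<in> V" for x y z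
    using Suc.prems(3) that unfolding affine_closed_def by blast
  consider (only0) "V1 = {}" | (only1) "V0 = {}" | (both) "V0 \<noteq> {}" "V1 \<noteq> {}"
    by blast
  then show ?case
  proof cases
    case only0
    with IH Suc.prems(1) V obtain t L where "affine_map t n L" "bij_betw L (vec t) V0"
      by blast
    then have "affine_map t (Suc n) (\<lambda>x. False # L x)" "bij_betw (\<lambda>x. False # L x) (vec t) V"
      using only0 V by (auto intro: affine_map_Cons dest: bij_betw_Cons)
    then show ?thesis
      by blast
  next
    case only1
    with IH Suc.prems(1) V obtain t L where "affine_map t n L" "bij_betw L (vec t) V1"
      by blast
    then have "affine_map t (Suc n) (\<lambda>x. True # L x)" "bij_betw (\<lambda>x. True # L x) (vec t) V"
      using only1 V by (auto intro: affine_map_Cons dest: bij_betw_Cons)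
    then show ?thesis
      by blast
  next
    case both
    then obtain u w where u: "u \<in> V0" and w: "w \<in> V1"
      by blast
    define d where "d = vadd w u"
    have d: "d \<in> vec n"
      using subsetD[OF sub(1) u] subsetD[OF sub(2) w] by (simp add: d_def)
    have "vadd d ` V0 = V1"
    proof (intro equalityI subsetI)
      fix z assume "z \<in> vadd d ` V0"
      then obtain y where y: "y \<in> V0" "z = vadd d y"
        by blast
      have "vadd (vadd (True # w) (False # u)) (False # y) \<in> V"
        using add3 u w y by (simp only: V0_def V1_def mem_Collect_eq)
      then show "z \<in> V1"
        using y by (simp add: V1_def d_def)
    next
      fix y assume y: "y \<in> V1"
      have "vadd (vadd (False # u) (True # w)) (True # y) \<in> V"
        using add3 u w y by (simp only: V0_def V1_def mem_Collect_eq)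
      then have "vadd d y \<in> V0"
        by (simp add: V0_def d_def vadd_commute)
      moreover have "y = vadd d (vadd d y)"
        using y d sub by (auto simp: vadd_vadd_cancel)
      ultimately show "y \<in> vadd d ` V0"
        by blast
    qed
    moreover obtain t L where L: "affine_map t n L" "bij_betw L (vec t) V0"
      using IH both by blast
    ultimately have
      "affine_map (Suc t) (Suc n) (\<lambda>z. hd z # (if hd z then vadd d (L (tl z)) else L (tl z)))"
      "bij_betw (\<lambda>z. hd z # (if hd z then vadd d (L (tl z)) else L (tl z))) (vec (Suc t)) V"
      using V affine_map_split[OF L(1) d] bij_betw_split[OF L(2) d sub(1)] by simp_all
    then show ?thesis
      by blast
  qed
qed

definition computes :: "'a set \<Rightarrow> ('a \<Rightarrow> 'a \<Rightarrow> 'a \<Rightarrow> 'a \<Rightarrow> bool) \<Rightarrow> 'a proto \<Rightarrow> bool" where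
  "computes D G P \<longleftrightarrow> proto_wf P \<and>
     (\<forall>x1\<in>D. \<forall>x2\<in>D. \<forall>x3\<in>D. \<forall>x4\<in>D. proto_run P [x1, x2, x3, x4] = G x1 x2 x3 x4)"

lemma CC4_eq_Least: "CC4 D G = (LEAST d. \<exists>P. computes D G P \<and> proto_depth P = d)"
  by (auto simp: CC4_def computes_def intro!: arg_cong[where f = Least])

lemma CC4_le_depth: "computes D G P \<Longrightarrow> CC4 D G \<le> proto_depth P"
  unfolding CC4_eq_Least by (rule Least_le) blast

lemma CC4_attained:
  assumes "computes D G P"
  obtains Q where "computes D G Q" and "proto_depth Q = CC4 D G"
proof -
  have "\<exists>d P. computes D G P \<and> proto_depth P = d"
    using assms by blast
  from LeastI_ex[OF this] show ?thesis
    using that unfolding CC4_eq_Least by blast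
qed

fun proto_reveal :: "nat \<Rightarrow> nat \<Rightarrow> (bool list \<Rightarrow> bool list proto) \<Rightarrow> bool list proto" where
  "proto_reveal i 0 k = k []"
| "proto_reveal i (Suc m) k =
     Node i (\<lambda>x. x ! m) (proto_reveal i m (\<lambda>p. k (p @ [False]))) (proto_reveal i m (\<lambda>p. k (p @ [True])))"

lemma proto_wf_reveal: "i < 4 \<Longrightarrow> (\<And>p. proto_wf (k p)) \<Longrightarrow> proto_wf (proto_reveal i m k)"
  by (induction m arbitrary: k) auto

lemma proto_run_reveal:
  "m \<le> length (xs ! i) \<Longrightarrow> proto_run (proto_reveal i m k) xs = proto_run (k (take m (xs ! i))) xs"
proof (induction m arbitrary: k)
  case (Suc m)
  then have "take (Suc m) (xs ! i) = take m (xs ! i) @ [xs ! i ! m]"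
    by (simp add: take_Suc_conv_app_nth)
  with Suc show ?case
    by simp
qed simp

lemma ex_computes_vec: "\<exists>P. computes (vec t) G P"
proof
  let ?P = "proto_reveal 0 t (\<lambda>a. proto_reveal 1 t (\<lambda>b. proto_reveal 2 t (\<lambda>c.
              proto_reveal 3 t (\<lambda>d. Leaf (G a b c d)))))"
  show "computes (vec t) G ?P"
    by (auto simp: computes_def proto_run_reveal intro!: proto_wf_reveal)
qed

fun proto_pullback :: "(nat \<Rightarrow> 'a \<Rightarrow> 'b) \<Rightarrow> 'b proto \<Rightarrow> 'a proto" where
  "proto_pullback \<phi> (Leaf b) = Leaf b"
| "proto_pullback \<phi> (Node i g l r) = Node i (\<lambda>x. g (\<phi> i x)) (proto_pullback \<phi> l) (proto_pullback \<phi> r)"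

lemma proto_depth_pullback [simp]: "proto_depth (proto_pullback \<phi> P) = proto_depth P"
  by (induction P) auto

lemma proto_wf_pullback: "proto_wf P \<Longrightarrow> proto_wf (proto_pullback \<phi> P)"
  by (induction P) auto

lemma proto_run_pullback:
  "proto_wf P \<Longrightarrow>
     proto_run (proto_pullback \<phi> P) [a, b, c, d] = proto_run P [\<phi> 0 a, \<phi> 1 b, \<phi> 2 c, \<phi> 3 d]"
proof (induction P)
  case (Node i g l r)
  then have "i = 0 \<or> i = 1 \<or> i = 2 \<or> i = 3"
    by auto
  with Node show ?case
    by (auto simp: numeral_eq_Suc)
qed simp

lemma CC4_pullback_le:
  fixes \<phi> :: "nat \<Rightarrow> 'a \<Rightarrow> 'b"
  assumes "computes D G P"
    and maps: "\<And>i x. x \<in> D' \<Longrightarrow> \<phi> i x \<in> D"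
    and G': "\<And>x1 x2 x3 x4. \<lbrakk>x1 \<in> D'; x2 \<in> D'; x3 \<in> D'; x4 \<in> D'\<rbrakk> \<Longrightarrow>
               G' x1 x2 x3 x4 = G (\<phi> 0 x1) (\<phi> 1 x2) (\<phi> 2 x3) (\<phi> 3 x4)"
  shows "CC4 D' G' \<le> CC4 D G"
proof -
  obtain Q where Q: "computes D G Q" "proto_depth Q = CC4 D G"
    using assms(1) by (rule CC4_attained)
  have "computes D' G' (proto_pullback \<phi> Q)"
    using Q(1) maps G' by (simp add: computes_def proto_wf_pullback proto_run_pullback)
  from CC4_le_depth[OF this] show ?thesis
    using Q(2) by simp
qed

lemma affine_map_vadd3:
  assumes L: "affine_map t n L" and "x \<in> vec t" "y \<in> vec t" "z \<in> vec t"
  shows "L (vadd (vadd x y) z) = vadd (vadd (L x) (L y)) (L z)"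
proof -
  have len: "length (L v) = n" if "v \<in> vec t" for v
    using L that by (simp add: affine_map_def)
  have "L (vadd (vadd x y) z) =
          vadd (vadd (vadd (vadd (L x) (L y)) (L (vzero t))) (L z)) (L (vzero t))"
    using L assms by (simp add: affine_map_def)
  also have "\<dots> = vadd (vadd (L x) (L y)) (L z)"
    using assms len[of x] len[of y] len[of z] len[of "vzero t"]
    by (intro nth_equalityI) auto
  finally show ?thesis .
qed

lemma affine_map_vadd4:
  assumes A: "affine_map t n A" and "x1 \<in> vec t" "x2 \<in> vec t" "x3 \<in> vec t" "x4 \<in> vec t"
  shows "A (vadd (vadd (vadd x1 x2) x3) x4) =
           vadd (vadd (vadd (vadd (A x1) (A (vzero t))) (A x2)) (A x3)) (A x4)"
proof -
  have len: "length (A v) = n" if "v \<in> vec t" for v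
    using A that by (simp add: affine_map_def)
  have "A (vadd (vadd (vadd x1 x2) x3) x4) =
          vadd (vadd (vadd (vadd (vadd (vadd (A x1) (A x2)) (A (vzero t))) (A x3))
            (A (vzero t))) (A x4)) (A (vzero t))"
    using A assms by (simp add: affine_map_def)
  also have "\<dots> = vadd (vadd (vadd (vadd (A x1) (A (vzero t))) (A x2)) (A x3)) (A x4)"
    using assms len[of x1] len[of x2] len[of x3] len[of x4] len[of "vzero t"]
    by (intro nth_equalityI) auto
  finally show ?thesis .
qed

lemma affine_map_inv_comp:
  assumes LU: "affine_map tU n LU" "inj_on LU (vec tU)"
    and LW: "affine_map tW n LW" "LW ` vec tW \<subseteq> LU ` vec tU"
  shows "affine_map tW tU (the_inv_into (vec tU) LU \<circ> LW)"
proof -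
  let ?A = "the_inv_into (vec tU) LU \<circ> LW"
  have LW_in: "LW x \<in> LU ` vec tU" if "x \<in> vec tW" for x
    using LW(2) that by blast
  have A_in: "?A x \<in> vec tU" if "x \<in> vec tW" for x
    using the_inv_into_into[OF LU(2) LW_in[OF that] order_refl] by simp
  have LU_A: "LU (?A x) = LW x" if "x \<in> vec tW" for x
    using f_the_inv_into_f[OF LU(2) LW_in[OF that]] by simp
  have "?A (vadd x y) = vadd (vadd (?A x) (?A y)) (?A (vzero tW))"
    if "x \<in> vec tW" "y \<in> vec tW" for x y
  proof (rule inj_onD[OF LU(2)])
    have "LU (vadd (vadd (?A x) (?A y)) (?A (vzero tW))) =
            vadd (vadd (LW x) (LW y)) (LW (vzero tW))"
      using that A_in LU_A by (simp add: affine_map_vadd3[OF LU(1)])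
    also have "\<dots> = LW (vadd x y)"
      using that LW(1) by (simp add: affine_map_def)
    also have "\<dots> = LU (?A (vadd x y))"
      using that LU_A[of "vadd x y"] by simp
    finally show "LU (?A (vadd x y)) = LU (vadd (vadd (?A x) (?A y)) (?A (vzero tW)))" ..
    show "?A (vadd x y) \<in> vec tU" "vadd (vadd (?A x) (?A y)) (?A (vzero tW)) \<in> vec tU"
      using that A_in by auto
  qed
  with A_in show ?thesis
    by (simp add: affine_map_def)
qed

lemma CC4_affine_restriction_le:
  assumes LU: "affine_map tU n LU" "bij_betw LU (vec tU) U"
    and LW: "affine_map tW n LW" "bij_betw LW (vec tW) W"
    and "W \<subseteq> U"
  shows "CC4 (vec tW) (\<lambda>x1 x2 x3 x4. f (LW (vadd (vadd (vadd x1 x2) x3) x4)))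
       \<le> CC4 (vec tU) (\<lambda>x1 x2 x3 x4. f (LU (vadd (vadd (vadd x1 x2) x3) x4)))"
proof -
  define A where "A = the_inv_into (vec tU) LU \<circ> LW"
  have inj: "inj_on LU (vec tU)" and sub: "LW ` vec tW \<subseteq> LU ` vec tU"
    using LU(2) LW(2) \<open>W \<subseteq> U\<close> by (auto simp: bij_betw_def)
  have A: "affine_map tW tU A"
    unfolding A_def using LU(1) inj LW(1) sub by (rule affine_map_inv_comp)
  have LU_A: "LU (A x) = LW x" if "x \<in> vec tW" for x
  proof -
    have "LW x \<in> LU ` vec tU"
      using sub that by blast
    then show ?thesis
      by (simp add: A_def f_the_inv_into_f[OF inj])
  qed
  \<comment> \<open>Player 0 also absorbs the constant term of A, so the four shares sum to A of the sum.\<close>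
  define \<phi> where "\<phi> i x = (if i = (0::nat) then vadd (A x) (A (vzero tW)) else A x)" for i x
  obtain P where "computes (vec tU) (\<lambda>x1 x2 x3 x4. f (LU (vadd (vadd (vadd x1 x2) x3) x4))) P"
    using ex_computes_vec by blast
  then show ?thesis
  proof (rule CC4_pullback_le[where \<phi> = \<phi>])
    show "\<phi> i x \<in> vec tU" if "x \<in> vec tW" for i x
      using A that by (auto simp: \<phi>_def affine_map_def)
    fix x1 x2 x3 x4 assume x: "x1 \<in> vec tW" "x2 \<in> vec tW" "x3 \<in> vec tW" "x4 \<in> vec tW"
    have "LW (vadd (vadd (vadd x1 x2) x3) x4) = LU (A (vadd (vadd (vadd x1 x2) x3) x4))"
      using LU_A x by simp
    then show "f (LW (vadd (vadd (vadd x1 x2) x3) x4)) =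
                 f (LU (vadd (vadd (vadd (\<phi> 0 x1) (\<phi> 1 x2)) (\<phi> 2 x3)) (\<phi> 3 x4)))"
      using affine_map_vadd4[OF A x] by (simp add: \<phi>_def)
  qed
qed

lemma M_eq_CC4:
  assumes "affine_subspace n V"
  obtains t L where "affine_map t n L" "bij_betw L (vec t) V"
    "M n V g = CC4 (vec t) (\<lambda>x1 x2 x3 x4. g (L (vadd (vadd (vadd x1 x2) x3) x4)))"
proof -
  let ?P = "\<lambda>(t, L). affine_map t n L \<and> bij_betw L (vec t) V"
  have "\<exists>p. ?P p"
    using ex_affine_bij_onto affine_subspaceD[OF assms] by auto
  then have "?P (SOME p. ?P p)"
    by (rule someI_ex)
  then show ?thesis
    using that by (auto simp: M_def split: prod.splits)
qed

theorem lemma3p3: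
  fixes n :: nat and U W :: "bool list set" and f :: "bool list \<Rightarrow> bool"
  assumes "affine_subspace n U" and "affine_subspace n W" and "W \<subseteq> U"
  shows "M n W f \<le> M n U f"
proof -
  obtain tU LU where U: "affine_map tU n LU" "bij_betw LU (vec tU) U"
    "M n U f = CC4 (vec tU) (\<lambda>x1 x2 x3 x4. f (LU (vadd (vadd (vadd x1 x2) x3) x4)))"
    using assms(1) by (rule M_eq_CC4)
  obtain tW LW where W: "affine_map tW n LW" "bij_betw LW (vec tW) W"
    "M n W f = CC4 (vec tW) (\<lambda>x1 x2 x3 x4. f (LW (vadd (vadd (vadd x1 x2) x3) x4)))"
    using assms(2) by (rule M_eq_CC4)
  show ?thesis
    using CC4_affine_restriction_le[OF U(1,2) W(1,2) assms(3)] U(3) W(3) by simp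
qed

end
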